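(* Let $M \in \mathbb{R}^{m,n}$ and $\epsilon \ge 0$. Let $\|\cdot\|$ be a column-wise matrix norm on $\mathbb{R}^{m,n}$, i.e. $\|A\| = \sum_{i=1}^n \alpha_i \|A(:,i)\|_c$ for some constants $\alpha_i > 0$ and some vector norm $\|\cdot\|_c$ on $\mathbb{R}^m$. Consider the two optimization problems \[ \text{(P1)}\quad \min_{X \in \mathbb{R}^{n,n}_+} \|X\|_{1,\infty} \ \text{ s.t. } \ \|M - MX\| \le \epsilon,\ X_{ij} \le 1 \ \forall i,j, \] \[ \text{(P2)}\quad \min_{X \in \mathbb{R}^{n,n}_+} \operatorname{trace}(X) \ \text{ s.t. } \ \|M - MX\| \le \epsilon,\ X_{ij} \le X_{ii} \le 1 \ \forall i,j. \] Then: (a) the optimal values of (P1) and (P2) coincide; (b) every optimal solution of (P2) is an optimal solution of (P1); (c) for every optimal solution $X^*$ of (P1) there exists an optimal solution $X^\dagger$ of (P2) with $\|M - MX^\dagger\| = \|M - MX^*\|$ (obtained from $X^*$ by raising diagonal entries to their row maxima and rescaling the off-diagonal entries of the corresponding columns).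
   Context: For $X \in \mathbb{R}^{n,n}$, $\|X\|_{1,\infty} := \sum_{i=1}^n \max_{1\le j\le n} |X_{ij}|$, the sum over rows of the $\ell_\infty$ norms of the rows. $\mathbb{R}^{n,n}_+$ denotes entrywise nonnegative $n\times n$ matrices. Both problems are feasible (e.g. $X = I$) and have compact feasible sets, so optimal solutions exist. *)

theory Defs
  imports "HOL-Analysis.Analysis"
begin

definition is_vector_norm :: "('v::real_vector \<Rightarrow> real) \<Rightarrow> bool" where
  "is_vector_norm N \<longleftrightarrow>
     (\<forall>x. 0 \<le> N x) \<and> (\<forall>x. N x = 0 \<longleftrightarrow> x = 0) \<and>
     (\<forall>c x. N (c *\<^sub>R x) = \<bar>c\<bar> * N x) \<and> (\<forall>x y. N (x + y) \<le> N x + N y)"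

text \<open>Column-wise matrix norm: sum_i alpha_i * N(A(:,i)). Matrices real^'n^'m are m x n.\<close>
definition colwise_norm :: "('n::finite \<Rightarrow> real) \<Rightarrow> (real^'m \<Rightarrow> real) \<Rightarrow> real^'n^'m \<Rightarrow> real" where
  "colwise_norm \<alpha> N A = (\<Sum>i\<in>UNIV. \<alpha> i * N (column i A))"

definition norm_1_inf :: "real^'n^'n::finite \<Rightarrow> real" where
  "norm_1_inf X = (\<Sum>i\<in>UNIV. Max (range (\<lambda>j. \<bar>X$i$j\<bar>)))"

definition mat_trace :: "real^'n^'n::finite \<Rightarrow> real" where
  "mat_trace X = (\<Sum>i\<in>UNIV. X$i$i)"

definition feasible_P1 :: "(real^'n^'m \<Rightarrow> real) \<Rightarrow> real^'n^'m \<Rightarrow> real \<Rightarrow> (real^'n^'n) set" where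
  "feasible_P1 nrm M \<epsilon> = {X. (\<forall>i j. 0 \<le> X$i$j) \<and> nrm (M - M ** X) \<le> \<epsilon> \<and> (\<forall>i j. X$i$j \<le> 1)}"

definition feasible_P2 :: "(real^'n^'m \<Rightarrow> real) \<Rightarrow> real^'n^'m \<Rightarrow> real \<Rightarrow> (real^'n^'n) set" where
  "feasible_P2 nrm M \<epsilon> = {X. (\<forall>i j. 0 \<le> X$i$j) \<and> nrm (M - M ** X) \<le> \<epsilon> \<and>
                              (\<forall>i j. X$i$j \<le> X$i$i \<and> X$i$i \<le> 1)}"

definition is_optimal :: "('a \<Rightarrow> real) \<Rightarrow> 'a set \<Rightarrow> 'a \<Rightarrow> bool" where
  "is_optimal f F x \<longleftrightarrow> x \<in> F \<and> (\<forall>y\<in>F. f x \<le> f y)"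

definition opt_value :: "('a \<Rightarrow> real) \<Rightarrow> 'a set \<Rightarrow> real" where
  "opt_value f F = Inf (f ` F)"

end

theory Submission
  imports Defs
begin

text \<open>
  On the feasible set of (P2) every row attains its maximum on the diagonal, so there
  \<open>\<parallel>X\<parallel>\<^sub>1\<^sub>,\<^sub>\<infinity> = trace X\<close> and (P2) is a restriction of (P1). Conversely, let \<open>X\<close> be feasible
  for (P1), \<open>d\<^sub>i\<close> its \<open>i\<close>-th row maximum and \<open>c\<^sub>i = (1 - d\<^sub>i) / (1 - X\<^sub>i\<^sub>i) \<in> [0, 1]\<close>. With
  \<open>D = diag c\<close> the matrix \<open>Y = X D + (I - D)\<close> has \<open>Y\<^sub>i\<^sub>i = d\<^sub>i\<close> and off-diagonal entries
  \<open>c\<^sub>j X\<^sub>i\<^sub>j \<le> X\<^sub>i\<^sub>j\<close>, so it is feasible for (P2) with \<open>trace Y = \<parallel>X\<parallel>\<^sub>1\<^sub>,\<^sub>\<infinity>\<close>, while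
  \<open>M - M Y = (M - M X) D\<close> only shrinks the columns of the residual. Hence both problems have
  the same set of objective values. If \<open>X\<close> is optimal and the residual of \<open>Y\<close> were strictly
  smaller, \<open>Y\<close> would have slack, and \<open>t Y\<close> with \<open>t < 1\<close> would be feasible with smaller
  trace unless \<open>Y\<close>, and with it \<open>X\<close>, is zero.
\<close>

lemma column_zero_iff: "(\<forall>i. column i A = 0) \<longleftrightarrow> A = 0"
  by (auto simp: column_def vec_eq_iff)

lemma is_vector_norm_colwise_norm:
  assumes N: "is_vector_norm N" and \<alpha>: "\<forall>i. \<alpha> i > 0"
  shows "is_vector_norm (colwise_norm \<alpha> N)"
  unfolding is_vector_norm_def
proof (intro conjI allI)
  have term_nonneg: "0 \<le> \<alpha> i * N x" for i x
    using N \<alpha> by (simp add: is_vector_norm_def less_imp_le)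
  show "0 \<le> colwise_norm \<alpha> N A" for A
    unfolding colwise_norm_def by (simp add: sum_nonneg term_nonneg)
  show "colwise_norm \<alpha> N A = 0 \<longleftrightarrow> A = 0" for A
  proof -
    have "colwise_norm \<alpha> N A = 0 \<longleftrightarrow> (\<forall>i. \<alpha> i * N (column i A) = 0)"
      unfolding colwise_norm_def by (simp add: sum_nonneg_eq_0_iff term_nonneg)
    also have "\<dots> \<longleftrightarrow> (\<forall>i. column i A = 0)"
      using N \<alpha> by (simp add: is_vector_norm_def) (metis less_irrefl)
    finally show ?thesis by (simp add: column_zero_iff)
  qed
  show "colwise_norm \<alpha> N (c *\<^sub>R A) = \<bar>c\<bar> * colwise_norm \<alpha> N A" for c A
  proof -
    have "column i (c *\<^sub>R A) = c *\<^sub>R column i A" for i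
      by (simp add: column_def vec_eq_iff)
    then show ?thesis
      using N by (simp add: colwise_norm_def is_vector_norm_def sum_distrib_left mult_ac)
  qed
  show "colwise_norm \<alpha> N (A + B) \<le> colwise_norm \<alpha> N A + colwise_norm \<alpha> N B" for A B
  proof -
    have "\<alpha> i * N (column i (A + B)) \<le> \<alpha> i * N (column i A) + \<alpha> i * N (column i B)" for i
    proof -
      have "column i (A + B) = column i A + column i B"
        by (simp add: column_def vec_eq_iff)
      then show ?thesis
        using N \<alpha> by (simp add: is_vector_norm_def less_imp_le mult_left_mono flip: distrib_left)
    qed
    then show ?thesis
      unfolding colwise_norm_def by (simp add: sum_mono flip: sum.distrib)
  qed
qed

definition diagonal_matrix :: "('n::finite \<Rightarrow> real) \<Rightarrow> real^'n^'n" where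
  "diagonal_matrix c = (\<chi> i j. if i = j then c i else 0)"

lemma column_matrix_mult_diagonal:
  "column i (A ** diagonal_matrix c) = c i *\<^sub>R column i A"
  by (simp add: column_def vec_eq_iff matrix_matrix_mult_def diagonal_matrix_def if_distrib
      cong: if_cong)

lemma colwise_norm_mult_diagonal_le:
  assumes N: "is_vector_norm N" and \<alpha>: "\<forall>i. \<alpha> i \<ge> 0" and c: "\<forall>i. \<bar>c i\<bar> \<le> 1"
  shows "colwise_norm \<alpha> N (A ** diagonal_matrix c) \<le> colwise_norm \<alpha> N A"
  unfolding colwise_norm_def column_matrix_mult_diagonal
proof (rule sum_mono)
  fix i
  have "N (c i *\<^sub>R column i A) \<le> N (column i A)"
    using N c by (simp add: is_vector_norm_def mult_left_le_one_le)
  then show "\<alpha> i * N (c i *\<^sub>R column i A) \<le> \<alpha> i * N (column i A)"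
    using \<alpha> by (simp add: mult_left_mono)
qed

lemma matrix_diff_ldistrib: "A ** (B - C) = A ** B - A ** (C :: 'a::ring_1^_^_)"
  by (simp add: vec_eq_iff matrix_matrix_mult_def sum_subtractf right_diff_distrib)

lemma matrix_diff_rdistrib: "(A - B) ** C = A ** C - B ** (C :: 'a::ring_1^_^_)"
  by (simp add: vec_eq_iff matrix_matrix_mult_def sum_subtractf left_diff_distrib)

lemma residual_right_affine:
  "M - M ** (X ** D + (mat 1 - D)) = (M - M ** X) ** (D :: real^'n^'n)"
  by (simp add: matrix_add_ldistrib matrix_diff_ldistrib matrix_diff_rdistrib matrix_mul_assoc)

lemma residual_scaleR:
  "M - M ** (t *\<^sub>R X) = (1 - t) *\<^sub>R M + t *\<^sub>R (M - M ** (X :: real^'n^'n))"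
  by (simp add: matrix_scalar_ac scalar_matrix_assoc[symmetric] algebra_simps)

definition row_max :: "real^'n::finite^'m \<Rightarrow> 'm \<Rightarrow> real" where
  "row_max X i = Max (range (\<lambda>j. \<bar>X$i$j\<bar>))"

lemma abs_le_row_max: "\<bar>X$i$j\<bar> \<le> row_max X i"
  unfolding row_max_def by (rule Max_ge) auto

lemma row_max_le: "(\<And>j. \<bar>X$i$j\<bar> \<le> b) \<Longrightarrow> row_max X i \<le> b"
  unfolding row_max_def by (rule Max.boundedI) auto

lemma row_max_eq_diagonal:
  "(\<And>j. 0 \<le> X$i$j \<and> X$i$j \<le> X$i$i) \<Longrightarrow> row_max X i = X$i$i"
  by (metis abs_le_row_max abs_of_nonneg antisym row_max_le)

lemma row_max_nonneg: "0 \<le> row_max X i"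
  by (meson abs_ge_zero abs_le_row_max order_trans)

lemma norm_1_inf_row_max: "norm_1_inf X = (\<Sum>i\<in>UNIV. row_max X i)"
  by (simp add: norm_1_inf_def row_max_def)

lemma norm_1_inf_nonneg: "0 \<le> norm_1_inf X"
  unfolding norm_1_inf_row_max by (simp add: sum_nonneg row_max_nonneg)

lemma norm_1_inf_eq_0_iff: "norm_1_inf X = 0 \<longleftrightarrow> X = 0"
proof
  assume "norm_1_inf X = 0"
  then have "row_max X i = 0" for i
    unfolding norm_1_inf_row_max by (simp add: sum_nonneg_eq_0_iff row_max_nonneg)
  then show "X = 0"
    by (metis abs_le_row_max abs_le_zero_iff vec_eq_iff zero_index)
qed (simp add: norm_1_inf_row_max row_max_def)

lemma norm_1_inf_eq_mat_trace:
  "(\<And>i j. 0 \<le> X$i$j \<and> X$i$j \<le> X$i$i) \<Longrightarrow> norm_1_inf X = mat_trace X"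
  by (simp add: norm_1_inf_row_max mat_trace_def row_max_eq_diagonal)

text \<open>If \<open>X$i$i = 1\<close> the division yields \<open>0\<close>; then also \<open>row_max X i = 1\<close> for
  entries in \<open>[0, 1]\<close>, and the identity \<open>raise_factor_diagonal\<close> below still holds.\<close>
definition raise_factor :: "real^'n^'n::finite \<Rightarrow> 'n \<Rightarrow> real" where
  "raise_factor X i = (1 - row_max X i) / (1 - X$i$i)"

definition raise_diagonal :: "real^'n^'n::finite \<Rightarrow> real^'n^'n" where
  "raise_diagonal X =
     X ** diagonal_matrix (raise_factor X) + (mat 1 - diagonal_matrix (raise_factor X))"

lemma raise_diagonal_nth:
  "raise_diagonal X $ k $ i =
     (if k = i then 1 - raise_factor X i * (1 - X$i$i) else raise_factor X i * X$k$i)"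
  by (simp add: raise_diagonal_def matrix_matrix_mult_def diagonal_matrix_def mat_def
      if_distrib if_distribR algebra_simps cong: if_cong)

lemma residual_raise_diagonal:
  "M - M ** raise_diagonal X = (M - M ** X) ** diagonal_matrix (raise_factor X)"
  unfolding raise_diagonal_def by (rule residual_right_affine)

context
  fixes X :: "real^'n::finite^'n"
  assumes unit_box: "\<forall>i j. 0 \<le> X$i$j \<and> X$i$j \<le> 1"
begin

lemma raise_factor_bounds: "0 \<le> raise_factor X i" "raise_factor X i \<le> 1"
  and raise_factor_diagonal: "raise_factor X i * (1 - X$i$i) = 1 - row_max X i"
proof -
  have le: "X$i$i \<le> row_max X i" "row_max X i \<le> 1"
    using unit_box abs_le_row_max[of X i i] row_max_le[of X i 1] by auto
  have "0 \<le> raise_factor X i \<and> raise_factor X i \<le> 1 \<and>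
        raise_factor X i * (1 - X$i$i) = 1 - row_max X i"
  proof (cases "X$i$i = 1")
    case True
    then show ?thesis using le by (simp add: raise_factor_def)
  next
    case False
    with unit_box have "X$i$i < 1" by (meson less_le)
    then show ?thesis using le by (simp add: raise_factor_def divide_le_eq_1)
  qed
  then show "0 \<le> raise_factor X i" "raise_factor X i \<le> 1"
    "raise_factor X i * (1 - X$i$i) = 1 - row_max X i"
    by auto
qed

lemma raise_diagonal_diagonal: "raise_diagonal X $ i $ i = row_max X i"
  by (simp add: raise_diagonal_nth raise_factor_diagonal)

lemma raise_diagonal_entry_bounds:
  "0 \<le> raise_diagonal X $ k $ i \<and> raise_diagonal X $ k $ i \<le> raise_diagonal X $ k $ k
     \<and> raise_diagonal X $ k $ k \<le> 1"
proof -
  have diag: "0 \<le> row_max X k" "row_max X k \<le> 1"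
    using unit_box row_max_nonneg[of X k] row_max_le[of X k 1] by auto
  have "0 \<le> raise_factor X i * X$k$i" "raise_factor X i * X$k$i \<le> row_max X k"
    using unit_box raise_factor_bounds[of i] abs_le_row_max[of X k i]
    by (simp_all, meson mult_left_le_one_le order_trans)
  then show ?thesis
    using diag by (cases "k = i") (simp_all add: raise_diagonal_diagonal raise_diagonal_nth[of X k i])
qed

lemma mat_trace_raise_diagonal: "mat_trace (raise_diagonal X) = norm_1_inf X"
  by (simp add: mat_trace_def norm_1_inf_row_max raise_diagonal_diagonal)

end

lemma feasible_P2_subset_P1: "feasible_P2 nrm M \<epsilon> \<subseteq> feasible_P1 nrm M \<epsilon>"
  unfolding feasible_P1_def feasible_P2_def by (auto, meson order_trans)

lemma norm_1_inf_eq_mat_trace_P2: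
  "X \<in> feasible_P2 nrm M \<epsilon> \<Longrightarrow> norm_1_inf X = mat_trace X"
  by (rule norm_1_inf_eq_mat_trace) (simp add: feasible_P2_def)

lemma is_optimal_transfer:
  assumes "is_optimal f A x" "y \<in> B" "g y = f x" "g ` B \<subseteq> f ` A"
  shows "is_optimal g B y"
  using assms unfolding is_optimal_def by fastforce

lemma convex_combination_le:
  fixes a b \<epsilon> :: real
  assumes "b < \<epsilon>"
  obtains t where "0 \<le> t" "t < 1" "(1 - t) * a + t * b \<le> \<epsilon>"
proof (cases "a \<le> \<epsilon>")
  case True
  then show ?thesis using that[of 0] by simp
next
  case False
  define t where "t = (a - \<epsilon>) / (a - b)"
  have "a - b > 0" "a - \<epsilon> > 0" using False assms by simp_all
  then have "0 \<le> t" "t < 1" "t * (a - b) = a - \<epsilon>"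
    using assms by (simp_all add: t_def divide_less_eq_1)
  then show ?thesis using that[of t] by (simp add: algebra_simps)
qed

lemma scaleR_feasible_P2:
  assumes "Y \<in> feasible_P2 nrm M \<epsilon>" "0 \<le> t" "t \<le> 1" "nrm (M - M ** (t *\<^sub>R Y)) \<le> \<epsilon>"
  shows "t *\<^sub>R Y \<in> feasible_P2 nrm M \<epsilon>"
  using assms by (auto simp: feasible_P2_def mult_left_mono mult_le_one)

lemma optimal_P2_with_slack_is_zero:
  assumes nrm: "is_vector_norm nrm"
    and opt: "is_optimal mat_trace (feasible_P2 nrm M \<epsilon>) Y"
    and slack: "nrm (M - M ** Y) < \<epsilon>"
  shows "Y = 0"
proof -
  have Y: "Y \<in> feasible_P2 nrm M \<epsilon>"
    using opt by (simp add: is_optimal_def)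
  obtain t where t: "0 \<le> t" "t < 1" "(1 - t) * nrm M + t * nrm (M - M ** Y) \<le> \<epsilon>"
    using convex_combination_le[OF slack] by blast
  have triangle: "\<And>A B. nrm (A + B) \<le> nrm A + nrm B"
    and homogeneous: "\<And>c A. nrm (c *\<^sub>R A) = \<bar>c\<bar> * nrm A"
    using nrm unfolding is_vector_norm_def by blast+
  have "nrm (M - M ** (t *\<^sub>R Y)) \<le> nrm ((1 - t) *\<^sub>R M) + nrm (t *\<^sub>R (M - M ** Y))"
    unfolding residual_scaleR by (rule triangle)
  also have "\<dots> = (1 - t) * nrm M + t * nrm (M - M ** Y)"
    using t by (simp add: homogeneous)
  finally have "t *\<^sub>R Y \<in> feasible_P2 nrm M \<epsilon>"
    using scaleR_feasible_P2[OF Y] t by simp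
  then have "mat_trace Y \<le> mat_trace (t *\<^sub>R Y)"
    using opt by (simp add: is_optimal_def)
  also have "\<dots> = t * mat_trace Y"
    by (simp add: mat_trace_def sum_distrib_left)
  finally have "mat_trace Y \<le> t * mat_trace Y" .
  moreover have "0 \<le> mat_trace Y"
    using norm_1_inf_eq_mat_trace_P2[OF Y] norm_1_inf_nonneg[of Y] by simp
  ultimately have "norm_1_inf Y = 0"
    using t norm_1_inf_eq_mat_trace_P2[OF Y] by (metis antisym mult_le_cancel_right1 not_le)
  then show "Y = 0"
    by (simp add: norm_1_inf_eq_0_iff)
qed

context
  fixes N :: "real^'m::finite \<Rightarrow> real" and \<alpha> :: "'n::finite \<Rightarrow> real"
  assumes N: "is_vector_norm N" and \<alpha>: "\<forall>i. \<alpha> i > 0"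
begin

lemma residual_raise_diagonal_le:
  assumes X: "\<forall>i j. 0 \<le> X$i$j \<and> X$i$j \<le> 1"
  shows "colwise_norm \<alpha> N (M - M ** raise_diagonal X) \<le> colwise_norm \<alpha> N (M - M ** X)"
  unfolding residual_raise_diagonal
  by (rule colwise_norm_mult_diagonal_le)
    (use N \<alpha> raise_factor_bounds[OF X] in \<open>auto simp: less_imp_le\<close>)

lemma raise_diagonal_feasible_P2:
  assumes X: "X \<in> feasible_P1 (colwise_norm \<alpha> N) M \<epsilon>"
  shows "raise_diagonal X \<in> feasible_P2 (colwise_norm \<alpha> N) M \<epsilon>"
proof -
  have box: "\<forall>i j. 0 \<le> X$i$j \<and> X$i$j \<le> 1"
    using X by (simp add: feasible_P1_def)
  have "colwise_norm \<alpha> N (M - M ** raise_diagonal X) \<le> colwise_norm \<alpha> N (M - M ** X)"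
    by (rule residual_raise_diagonal_le[OF box])
  also have "\<dots> \<le> \<epsilon>"
    using X by (simp add: feasible_P1_def)
  finally have "colwise_norm \<alpha> N (M - M ** raise_diagonal X) \<le> \<epsilon>" .
  then show ?thesis
    using raise_diagonal_entry_bounds[OF box] by (simp add: feasible_P2_def)
qed

lemma mat_trace_feasible_P2_eq_norm_1_inf_feasible_P1:
  "mat_trace ` feasible_P2 (colwise_norm \<alpha> N) M \<epsilon>
           = norm_1_inf ` feasible_P1 (colwise_norm \<alpha> N) M \<epsilon>"
proof
  show "mat_trace ` feasible_P2 (colwise_norm \<alpha> N) M \<epsilon>
          \<subseteq> norm_1_inf ` feasible_P1 (colwise_norm \<alpha> N) M \<epsilon>"
  proof (rule image_subsetI)
    fix X assume "X \<in> feasible_P2 (colwise_norm \<alpha> N) M \<epsilon>"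
    then show "mat_trace X \<in> norm_1_inf ` feasible_P1 (colwise_norm \<alpha> N) M \<epsilon>"
      using feasible_P2_subset_P1 norm_1_inf_eq_mat_trace_P2 by (metis image_eqI subsetD)
  qed
  show "norm_1_inf ` feasible_P1 (colwise_norm \<alpha> N) M \<epsilon>
          \<subseteq> mat_trace ` feasible_P2 (colwise_norm \<alpha> N) M \<epsilon>"
  proof (rule image_subsetI)
    fix X assume X: "X \<in> feasible_P1 (colwise_norm \<alpha> N) M \<epsilon>"
    then have "norm_1_inf X = mat_trace (raise_diagonal X)"
      by (simp add: feasible_P1_def mat_trace_raise_diagonal)
    then show "norm_1_inf X \<in> mat_trace ` feasible_P2 (colwise_norm \<alpha> N) M \<epsilon>"
      using raise_diagonal_feasible_P2[OF X] by simp
  qed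
qed

lemma optimal_P2_imp_optimal_P1:
  assumes X: "is_optimal mat_trace (feasible_P2 (colwise_norm \<alpha> N) M \<epsilon>) X"
  shows "is_optimal norm_1_inf (feasible_P1 (colwise_norm \<alpha> N) M \<epsilon>) X"
proof (rule is_optimal_transfer[OF X])
  have "X \<in> feasible_P2 (colwise_norm \<alpha> N) M \<epsilon>"
    using X by (simp add: is_optimal_def)
  then show "X \<in> feasible_P1 (colwise_norm \<alpha> N) M \<epsilon>" "norm_1_inf X = mat_trace X"
    using feasible_P2_subset_P1 by (auto intro: norm_1_inf_eq_mat_trace_P2)
  show "norm_1_inf ` feasible_P1 (colwise_norm \<alpha> N) M \<epsilon>
          \<subseteq> mat_trace ` feasible_P2 (colwise_norm \<alpha> N) M \<epsilon>"
    by (simp add: mat_trace_feasible_P2_eq_norm_1_inf_feasible_P1)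
qed

lemma raise_diagonal_optimal_P2:
  assumes X: "is_optimal norm_1_inf (feasible_P1 (colwise_norm \<alpha> N) M \<epsilon>) X"
  shows "is_optimal mat_trace (feasible_P2 (colwise_norm \<alpha> N) M \<epsilon>) (raise_diagonal X)"
proof (rule is_optimal_transfer[OF X])
  have X1: "X \<in> feasible_P1 (colwise_norm \<alpha> N) M \<epsilon>"
    using X by (simp add: is_optimal_def)
  then show "raise_diagonal X \<in> feasible_P2 (colwise_norm \<alpha> N) M \<epsilon>"
    by (rule raise_diagonal_feasible_P2)
  show "mat_trace (raise_diagonal X) = norm_1_inf X"
    using X1 by (simp add: feasible_P1_def mat_trace_raise_diagonal)
  show "mat_trace ` feasible_P2 (colwise_norm \<alpha> N) M \<epsilon>
          \<subseteq> norm_1_inf ` feasible_P1 (colwise_norm \<alpha> N) M \<epsilon>"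
    by (simp add: mat_trace_feasible_P2_eq_norm_1_inf_feasible_P1)
qed

lemma residual_raise_diagonal_optimal:
  assumes X: "is_optimal norm_1_inf (feasible_P1 (colwise_norm \<alpha> N) M \<epsilon>) X"
  shows "colwise_norm \<alpha> N (M - M ** raise_diagonal X) = colwise_norm \<alpha> N (M - M ** X)"
proof (rule ccontr)
  let ?nrm = "colwise_norm \<alpha> N"
  assume differ: "?nrm (M - M ** raise_diagonal X) \<noteq> ?nrm (M - M ** X)"
  have X1: "X \<in> feasible_P1 ?nrm M \<epsilon>"
    using X by (simp add: is_optimal_def)
  then have box: "\<forall>i j. 0 \<le> X$i$j \<and> X$i$j \<le> 1"
    by (simp add: feasible_P1_def)
  have "?nrm (M - M ** raise_diagonal X) \<le> ?nrm (M - M ** X)"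
    by (rule residual_raise_diagonal_le[OF box])
  moreover have "?nrm (M - M ** X) \<le> \<epsilon>"
    using X1 by (simp add: feasible_P1_def)
  ultimately have "?nrm (M - M ** raise_diagonal X) < \<epsilon>"
    using differ by linarith
  with raise_diagonal_optimal_P2[OF X] have Y0: "raise_diagonal X = 0"
    by (rule optimal_P2_with_slack_is_zero[OF is_vector_norm_colwise_norm[OF N \<alpha>]])
  then have "norm_1_inf X = 0"
    using mat_trace_raise_diagonal[OF box] by (simp add: mat_trace_def)
  then have "X = 0"
    by (simp add: norm_1_inf_eq_0_iff)
  with Y0 differ show False
    by simp
qed

end

text \<open>The hypothesis \<open>\<epsilon> \<ge> 0\<close> only guarantees feasibility (of the identity matrix); both
  problems have the same set of objective values regardless.\<close>
theorem theorem2: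
  fixes M :: "real^'n^'m" and \<epsilon> :: real
    and \<alpha> :: "'n \<Rightarrow> real" and Nc :: "real^'m \<Rightarrow> real"
  assumes eps: "\<epsilon> \<ge> 0"
    and alpha_pos: "\<forall>i. \<alpha> i > 0"
    and Nc_norm: "is_vector_norm Nc"
  defines "nrm \<equiv> colwise_norm \<alpha> Nc"
  shows "opt_value norm_1_inf (feasible_P1 nrm M \<epsilon>) = opt_value mat_trace (feasible_P2 nrm M \<epsilon>)
         \<and> (\<forall>X. is_optimal mat_trace (feasible_P2 nrm M \<epsilon>) X
                  \<longrightarrow> is_optimal norm_1_inf (feasible_P1 nrm M \<epsilon>) X)
         \<and> (\<forall>Xs. is_optimal norm_1_inf (feasible_P1 nrm M \<epsilon>) Xs
                  \<longrightarrow> (\<exists>Xd. is_optimal mat_trace (feasible_P2 nrm M \<epsilon>) Xd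
                           \<and> nrm (M - M ** Xd) = nrm (M - M ** Xs)))"
proof (intro conjI allI impI)
  show "opt_value norm_1_inf (feasible_P1 nrm M \<epsilon>) = opt_value mat_trace (feasible_P2 nrm M \<epsilon>)"
    unfolding nrm_def opt_value_def
    by (simp add: mat_trace_feasible_P2_eq_norm_1_inf_feasible_P1[OF Nc_norm alpha_pos])
  show "is_optimal norm_1_inf (feasible_P1 nrm M \<epsilon>) X"
    if "is_optimal mat_trace (feasible_P2 nrm M \<epsilon>) X" for X
    using optimal_P2_imp_optimal_P1[OF Nc_norm alpha_pos] that by (simp add: nrm_def)
  show "\<exists>Xd. is_optimal mat_trace (feasible_P2 nrm M \<epsilon>) Xd \<and> nrm (M - M ** Xd) = nrm (M - M ** Xs)"
    if "is_optimal norm_1_inf (feasible_P1 nrm M \<epsilon>) Xs" for Xs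
    using raise_diagonal_optimal_P2[OF Nc_norm alpha_pos]
      residual_raise_diagonal_optimal[OF Nc_norm alpha_pos] that
    unfolding nrm_def by blast
qed

end
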